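(* Let $m,n$ be non-negative integers. For $y\in\mathbb{R}$ define \[ R_{m,n}(y)=\int_{-1}^1P_n(x)\,P_{n+m}(x+y)\,dx . \] Then \[ R_{m,n}(y)=\dfrac{\Gamma\left(m+n+\frac{1}{2}\right)}{\Gamma(m+1)\Gamma\left(n+\frac{3}{2}\right)}(2y)^m\ {}_4F_3\left(\begin{array}{c}-\frac{m}{2},\frac{1-m}{2},\frac{1-m}{2},\frac{2-m}{2}\\ 1-m,\ \frac{1}{2}-m-n,\ n+\frac{3}{2}\end{array};\dfrac{4}{y^2}\right). \]
   Context: $P_n$ is the Legendre polynomial ($P_0=1$, $P_1(x)=x$, $(n+1)P_{n+1}(x)=(2n+1)xP_n(x)-nP_{n-1}(x)$). ${}_4F_3$ is the generalized hypergeometric series $\sum_k\frac{(a_1)_k\cdots(a_4)_k}{(b_1)_k(b_2)_k(b_3)_k}\frac{z^k}{k!}$ with $(a)_k$ the Pochhammer symbol; here it terminates (at the first upper parameter that is a non-positive integer), so $y^m\,{}_4F_3(\dots;4/y^2)$ is a polynomial in $y$ and the right-hand side is understood as this polynomial. *)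

theory Defs
  imports "HOL-Analysis.Analysis"
begin

fun legendre :: "nat \<Rightarrow> real \<Rightarrow> real" where
  "legendre 0 x = 1"
| "legendre (Suc 0) x = x"
| "legendre (Suc (Suc n)) x =
     ((2 * real n + 3) * x * legendre (Suc n) x - (real n + 1) * legendre n x) / (real n + 2)"

definition hyp4F3_coeff :: "real \<Rightarrow> real \<Rightarrow> real \<Rightarrow> real \<Rightarrow> real \<Rightarrow> real \<Rightarrow> real \<Rightarrow> nat \<Rightarrow> real" where
  "hyp4F3_coeff a1 a2 a3 a4 b1 b2 b3 k =
     (pochhammer a1 k * pochhammer a2 k * pochhammer a3 k * pochhammer a4 k) /
     (pochhammer b1 k * pochhammer b2 k * pochhammer b3 k * fact k)"

text \<open>The paper's right-hand side for R_{m,n}: the polynomial in y equal to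
  (2y)^m 4F3(-m/2,(1-m)/2,(1-m)/2,(2-m)/2; 1-m, 1/2-m-n, n+3/2; 4/y^2),
  where the series terminates after the index k = m div 2 (the first upper
  parameter that is a non-positive integer vanishes in the Pochhammer symbol
  at k = m div 2 + 1).  Multiplying y^m into (4/y^2)^k gives 4^k y^(m-2k).\<close>
definition R_rhs :: "nat \<Rightarrow> nat \<Rightarrow> real \<Rightarrow> real" where
  "R_rhs m n y =
     Gamma (real m + real n + 1/2) / (Gamma (real m + 1) * Gamma (real n + 3/2)) * 2 ^ m *
     (\<Sum>k\<in>{0..m div 2}.
        hyp4F3_coeff (- real m / 2) ((1 - real m) / 2) ((1 - real m) / 2) ((2 - real m) / 2)
                     (1 - real m) (1/2 - real m - real n) (real n + 3/2) k
        * 4 ^ k * y ^ (m - 2 * k))"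

end

theory Submission
  imports Defs
begin

(* Write T j y for the integral of P_n(x) P_j(x + y) over [-1, 1].  Differentiating under the
   integral sign and using P'_(j+2) = P'_j + (2j + 3) P_(j+1) gives
   T' (j+2) = T' j + (2j + 3) T (j+1), while orthogonality fixes T j 0 = 0 for j ~= n and
   T n 0 = 2/(2n + 1).  Hence T j vanishes for j < n, T n is constant, T (n+1) y = 2y, and the
   T (n+m) are determined by the recursion together with T (n+m) 0 = 0 for m > 0.
   The polynomials whose coefficient of y^(L+1) is
   2^(L+1) (L+k)! / ((L+1)! L! k!) * pochhammer (n + k + 3/2) L  (where m = L + 1 + 2k)
   satisfy the same recursion, which reduces to a three-term identity between these
   coefficients; comparing consecutive ratios identifies them with the terms of the 4F3 series. *)

section \<open>Derivatives and orthogonality of Legendre polynomials\<close>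

fun legendre_deriv :: "nat \<Rightarrow> real \<Rightarrow> real" where
  "legendre_deriv 0 x = 0"
| "legendre_deriv (Suc 0) x = 1"
| "legendre_deriv (Suc (Suc n)) x =
     ((2 * real n + 3) * (legendre (Suc n) x + x * legendre_deriv (Suc n) x)
       - (real n + 1) * legendre_deriv n x) / (real n + 2)"

lemma has_real_derivative_legendre:
  "(legendre n has_real_derivative legendre_deriv n x) (at x)"
proof (induction n x rule: legendre.induct)
  case (3 n x)
  show ?case
    unfolding legendre.simps legendre_deriv.simps
    by (rule DERIV_cdivide, (rule derivative_eq_intros 3 refl)+) (simp add: algebra_simps)
qed simp_all

lemma continuous_on_legendre [continuous_intros]:
  "continuous_on S f \<Longrightarrow> continuous_on S (\<lambda>x. legendre n (f x))"
  by (rule continuous_on_compose2[of UNIV])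
     (auto intro: DERIV_isCont continuous_at_imp_continuous_on has_real_derivative_legendre)

lemma continuous_legendre_deriv: "continuous_on UNIV (legendre_deriv n)"
proof (induction n rule: induct_nat_012)
  case (ge2 n)
  then show ?case
    unfolding legendre_deriv.simps by (intro continuous_intros) auto
qed simp_all

lemma continuous_on_legendre_deriv [continuous_intros]:
  "continuous_on S f \<Longrightarrow> continuous_on S (\<lambda>x. legendre_deriv n (f x))"
  by (rule continuous_on_compose2[OF continuous_legendre_deriv]) auto

lemma legendre_deriv_identities:
  "x * legendre_deriv (Suc n) x - legendre_deriv n x = (real n + 1) * legendre (Suc n) x \<and>
   (x\<^sup>2 - 1) * legendre_deriv (Suc n) x = (real n + 1) * (x * legendre (Suc n) x - legendre n x)"
proof (induction n)
  case 0
  then show ?case by (simp add: power2_eq_square)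
next
  case (Suc n)
  have ih_deriv: "legendre_deriv n x = x * legendre_deriv (Suc n) x - (real n + 1) * legendre (Suc n) x"
    and ih_flux: "(x\<^sup>2 - 1) * legendre_deriv (Suc n) x = (real n + 1) * (x * legendre (Suc n) x - legendre n x)"
    using Suc.IH by (simp_all add: algebra_simps)
  have deriv: "legendre_deriv (Suc (Suc n)) x
      = x * legendre_deriv (Suc n) x + (real n + 2) * legendre (Suc n) x"
    unfolding legendre_deriv.simps ih_deriv by (simp add: field_simps)
  have "x * legendre_deriv (Suc (Suc n)) x - legendre_deriv (Suc n) x
      = (x\<^sup>2 - 1) * legendre_deriv (Suc n) x + (real n + 2) * x * legendre (Suc n) x"
    unfolding deriv by (simp add: power2_eq_square algebra_simps)
  also have "\<dots> = (real (Suc n) + 1) * legendre (Suc (Suc n)) x"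
    unfolding ih_flux by (simp add: field_simps)
  finally have first: "x * legendre_deriv (Suc (Suc n)) x - legendre_deriv (Suc n) x
      = (real (Suc n) + 1) * legendre (Suc (Suc n)) x" .
  have "(x\<^sup>2 - 1) * legendre_deriv (Suc (Suc n)) x
      = x * ((x\<^sup>2 - 1) * legendre_deriv (Suc n) x) + (real n + 2) * (x\<^sup>2 - 1) * legendre (Suc n) x"
    unfolding deriv by (simp add: algebra_simps)
  also have "\<dots> = (real (Suc n) + 1) * (x * legendre (Suc (Suc n)) x - legendre (Suc n) x)"
    unfolding ih_flux by (simp add: field_simps) (simp add: algebra_simps power2_eq_square)
  finally show ?case using first by blast
qed

lemma legendre_deriv_Suc_Suc:
  "legendre_deriv (Suc (Suc n)) x = legendre_deriv n x + (2 * real n + 3) * legendre (Suc n) x"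
proof -
  have deriv_n: "legendre_deriv n x = x * legendre_deriv (Suc n) x - (real n + 1) * legendre (Suc n) x"
    using legendre_deriv_identities[of x n] by simp
  show ?thesis
    unfolding legendre_deriv.simps(3) deriv_n by (simp add: field_simps)
qed

lemma has_real_derivative_legendre_flux:
  "((\<lambda>x. (1 - x\<^sup>2) * legendre_deriv n x) has_real_derivative
     - (real n * (real n + 1)) * legendre n x) (at x)"
proof (cases n)
  case (Suc j)
  have flux: "(\<lambda>x. (1 - x\<^sup>2) * legendre_deriv n x)
      = (\<lambda>x. (real j + 1) * (legendre j x - x * legendre (Suc j) x))"
    using legendre_deriv_identities Suc by (simp add: fun_eq_iff algebra_simps)
  have deriv_j: "legendre_deriv j x = x * legendre_deriv (Suc j) x - (real j + 1) * legendre (Suc j) x"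
    using legendre_deriv_identities[of x j] by simp
  show ?thesis
    unfolding flux
    by (rule derivative_eq_intros has_real_derivative_legendre refl)+ (simp add: Suc deriv_j algebra_simps)
qed simp

lemma legendre_orthogonal:
  assumes "a \<noteq> b"
  shows "integral {-1..1} (\<lambda>x. legendre a x * legendre b x) = 0"
proof -
  define W where "W x = (1 - x\<^sup>2) * (legendre_deriv a x * legendre b x - legendre_deriv b x * legendre a x)" for x
  define c where "c = (real b - real a) * (real a + real b + 1)"
  have "(W has_real_derivative c * (legendre a x * legendre b x)) (at x)" for x
  proof -
    have "W = (\<lambda>x. ((1 - x\<^sup>2) * legendre_deriv a x) * legendre b x - ((1 - x\<^sup>2) * legendre_deriv b x) * legendre a x)"
      by (simp add: W_def fun_eq_iff algebra_simps)
    then show ?thesis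
      by (simp only:) (rule derivative_eq_intros has_real_derivative_legendre_flux
          has_real_derivative_legendre refl | simp add: c_def algebra_simps)+
  qed
  then have "((\<lambda>x. c * (legendre a x * legendre b x)) has_integral W 1 - W (-1)) {-1..1}"
    by (intro fundamental_theorem_of_calculus)
       (auto simp flip: has_real_derivative_iff_has_vector_derivative intro: has_field_derivative_at_within)
  then have "((\<lambda>x. c * (legendre a x * legendre b x)) has_integral 0) {-1..1}"
    by (simp add: W_def)
  then have "integral {-1..1} (\<lambda>x. c * (legendre a x * legendre b x)) = 0"
    by (rule integral_unique)
  then have "c * integral {-1..1} (\<lambda>x. legendre a x * legendre b x) = 0"
    by simp
  moreover have "c \<noteq> 0"
    using assms by (simp add: c_def)
  ultimately show ?thesis by simp
qed

lemma legendre_recurrence_integral: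
  "(real n + 2) * integral {-1..1} (\<lambda>x. legendre k x * legendre (Suc (Suc n)) x)
   = (2 * real n + 3) * integral {-1..1} (\<lambda>x. x * legendre k x * legendre (Suc n) x)
     - (real n + 1) * integral {-1..1} (\<lambda>x. legendre k x * legendre n x)"
proof -
  have "(real n + 2) * (legendre k x * legendre (Suc (Suc n)) x)
      = (2 * real n + 3) * (x * legendre k x * legendre (Suc n) x)
        - (real n + 1) * (legendre k x * legendre n x)" for x
    by (simp add: field_simps)
  moreover have "(\<lambda>x. x * legendre k x * legendre (Suc n) x) integrable_on {-1..1}"
    and "(\<lambda>x. legendre k x * legendre n x) integrable_on {-1..1}"
    by (intro integrable_continuous_interval continuous_intros)+
  ultimately show ?thesis
    by (simp flip: integral_mult_right add: integral_diff)
qed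

lemma legendre_norm: "integral {-1..1} (\<lambda>x. legendre n x * legendre n x) = 2 / (2 * real n + 1)"
proof (induction n)
  case 0
  then show ?case by simp
next
  case (Suc n)
  define K where "K = integral {-1..1} (\<lambda>x. x * legendre n x * legendre (Suc n) x)"
  define J where "J = integral {-1..1} (\<lambda>x. legendre (Suc n) x * legendre (Suc n) x)"
  have K: "(2 * real n + 3) * K = (real n + 1) * (2 / (2 * real n + 1))"
    using legendre_recurrence_integral[of n n] legendre_orthogonal[of n "Suc (Suc n)"] Suc.IH
    by (simp add: K_def)
  have J: "(real n + 1) * J = (2 * real n + 1) * K"
  proof (cases n)
    case 0
    then show ?thesis by (simp add: J_def K_def)
  next
    case (Suc i)
    then show ?thesis
      using legendre_recurrence_integral[of i "Suc n"] legendre_orthogonal[of "Suc n" i]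
      by (simp add: J_def K_def ac_simps)
  qed
  have "(real n + 1) * ((2 * real n + 3) * J) = (2 * real n + 1) * ((2 * real n + 3) * K)"
    using J by (simp add: ac_simps)
  also have "\<dots> = (real n + 1) * 2"
    using K by simp
  finally have "(2 * real n + 3) * J = 2"
    by (subst (asm) mult_left_cancel) linarith+
  then show ?case
    by (simp add: J_def field_simps)
qed

lemma legendre_inner:
  "integral {-1..1} (\<lambda>x. legendre a x * legendre b x) = (if a = b then 2 / (2 * real a + 1) else 0)"
  using legendre_norm legendre_orthogonal by simp

section \<open>The shifted overlap integral\<close>

lemma eq_if_same_real_derivative:
  fixes f g :: "real \<Rightarrow> real"
  assumes "\<And>y. (f has_real_derivative d y) (at y)" and "\<And>y. (g has_real_derivative d y) (at y)"
    and "f a = g a"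
  shows "f y = g y"
proof -
  have "\<forall>y. ((\<lambda>y. f y - g y) has_real_derivative 0) (at y)"
    using DERIV_diff[OF assms(1,2)] by simp
  then have "f y - g y = f a - g a"
    by (rule DERIV_isconst_all)
  with assms(3) show ?thesis by simp
qed

definition legendre_overlap :: "nat \<Rightarrow> nat \<Rightarrow> real \<Rightarrow> real" where
  "legendre_overlap n j y = integral {-1..1} (\<lambda>x. legendre n x * legendre j (x + y))"

definition legendre_overlap_deriv :: "nat \<Rightarrow> nat \<Rightarrow> real \<Rightarrow> real" where
  "legendre_overlap_deriv n j y = integral {-1..1} (\<lambda>x. legendre n x * legendre_deriv j (x + y))"

lemma has_real_derivative_legendre_overlap:
  "(legendre_overlap n j has_real_derivative legendre_overlap_deriv n j y) (at y)"
proof -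
  have "((\<lambda>y. integral (cbox (-1) 1) (\<lambda>x. legendre n x * legendre j (x + y))) has_field_derivative
      integral (cbox (-1) 1) (\<lambda>x. legendre n x * legendre_deriv j (x + y))) (at y within UNIV)"
  proof (rule leibniz_rule_field_derivative)
    fix y x :: real
    have "((\<lambda>y. legendre j (x + y)) has_real_derivative legendre_deriv j (x + y)) (at y)"
      using DERIV_chain2[OF has_real_derivative_legendre DERIV_add[OF DERIV_const DERIV_ident]] by simp
    then show "((\<lambda>y. legendre n x * legendre j (x + y)) has_field_derivative
        legendre n x * legendre_deriv j (x + y)) (at y within UNIV)"
      by (rule DERIV_cmult)
  qed (auto simp: split_beta intro!: integrable_continuous_interval continuous_intros)
  then show ?thesis
    unfolding legendre_overlap_def[abs_def] legendre_overlap_deriv_def cbox_interval .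
qed

lemma legendre_overlap_deriv_0: "legendre_overlap_deriv n 0 y = 0"
  by (simp add: legendre_overlap_deriv_def)

lemma legendre_overlap_deriv_1: "legendre_overlap_deriv n (Suc 0) y = legendre_overlap n 0 y"
  by (simp add: legendre_overlap_deriv_def legendre_overlap_def)

lemma legendre_overlap_deriv_Suc_Suc:
  "legendre_overlap_deriv n (Suc (Suc j)) y
   = legendre_overlap_deriv n j y + (2 * real j + 3) * legendre_overlap n (Suc j) y"
proof -
  have "(\<lambda>x. legendre n x * legendre_deriv j (x + y)) integrable_on {-1..1}"
    and "(\<lambda>x. legendre n x * legendre (Suc j) (x + y)) integrable_on {-1..1}"
    by (intro integrable_continuous_interval continuous_intros)+
  moreover have "legendre_overlap_deriv n (Suc (Suc j)) y = integral {-1..1}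
      (\<lambda>x. legendre n x * legendre_deriv j (x + y) + (2 * real j + 3) * (legendre n x * legendre (Suc j) (x + y)))"
    unfolding legendre_overlap_deriv_def legendre_deriv_Suc_Suc by (simp add: algebra_simps)
  ultimately show ?thesis
    by (simp add: integral_add legendre_overlap_deriv_def legendre_overlap_def)
qed

lemma legendre_overlap_at_0:
  "legendre_overlap n j 0 = (if j = n then 2 / (2 * real n + 1) else 0)"
  using legendre_inner[of n j] by (simp add: legendre_overlap_def)

lemma legendre_overlap_eq_at_0:
  assumes "\<And>y. legendre_overlap_deriv n j y = 0"
  shows "legendre_overlap n j y = legendre_overlap n j 0"
  using eq_if_same_real_derivative[where d = "\<lambda>_. 0" and g = "\<lambda>_. legendre_overlap n j 0"]
    has_real_derivative_legendre_overlap[of n j] assms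
  by simp

lemma legendre_overlap_deriv_eq_0:
  "j \<le> n \<Longrightarrow> legendre_overlap_deriv n j y = 0"
proof (induction j arbitrary: y rule: induct_nat_012)
  case 0
  then show ?case by (simp add: legendre_overlap_deriv_0)
next
  case 1
  have "legendre_overlap n 0 y = legendre_overlap n 0 0"
    by (rule legendre_overlap_eq_at_0) (simp add: legendre_overlap_deriv_0)
  with 1 show ?case
    by (simp add: legendre_overlap_deriv_1 legendre_overlap_at_0)
next
  case (ge2 j)
  have "legendre_overlap n (Suc j) y = legendre_overlap n (Suc j) 0"
    by (rule legendre_overlap_eq_at_0) (use ge2 in simp)
  with ge2 show ?case
    by (simp add: legendre_overlap_deriv_Suc_Suc legendre_overlap_at_0)
qed

lemma legendre_overlap_diag: "legendre_overlap n n y = 2 / (2 * real n + 1)"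
  using legendre_overlap_eq_at_0[of n n] legendre_overlap_deriv_eq_0[of n n]
  by (simp add: legendre_overlap_at_0)

lemma legendre_overlap_deriv_Suc: "legendre_overlap_deriv n (Suc n) y = 2"
proof (cases n)
  case 0
  then show ?thesis
    using legendre_overlap_diag[of 0] by (simp add: legendre_overlap_deriv_1)
next
  case (Suc i)
  then show ?thesis
    using legendre_overlap_deriv_eq_0[of i n] legendre_overlap_diag[of n]
    by (simp add: legendre_overlap_deriv_Suc_Suc field_simps)
qed

section \<open>Polynomials satisfying the overlap recursion\<close>

definition overlap_coeff :: "nat \<Rightarrow> nat \<Rightarrow> nat \<Rightarrow> real" where
  "overlap_coeff n L k = 2 ^ Suc L * fact (L + k) / (fact (Suc L) * fact L * fact k)
     * pochhammer (real n + real k + 3 / 2) L"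

lemma overlap_coeff_0_0: "overlap_coeff n 0 k = 2"
  by (simp add: overlap_coeff_def)

lemma overlap_coeff_Suc_0:
  "(real L + 2) * overlap_coeff n (Suc L) 0 = (2 * real n + 2 * real L + 3) * overlap_coeff n L 0"
proof -
  have "real L + 1 > 0" "real L + 2 > 0" "(fact L :: real) > 0"
    by auto
  then show ?thesis
    by (simp add: overlap_coeff_def pochhammer_Suc divide_simps; simp add: algebra_simps)
qed

lemma overlap_coeff_Suc_Suc:
  "(real L + 2) * overlap_coeff n (Suc L) (Suc k)
   = (real L + 2) * overlap_coeff n (Suc L) k
     + (2 * real n + 2 * real L + 4 * real k + 7) * overlap_coeff n L (Suc k)"
proof -
  have p: "pochhammer (real n + real k + 3 / 2) (Suc L)
      = (real n + real k + 3 / 2) * pochhammer (real n + real (Suc k) + 3 / 2) L"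
    by (simp add: pochhammer_rec add_ac)
  have q: "pochhammer (real n + real (Suc k) + 3 / 2) (Suc L)
      = pochhammer (real n + real (Suc k) + 3 / 2) L * (real n + real k + real L + 5 / 2)"
    by (simp add: pochhammer_Suc add_ac)
  have "real L + 1 > 0" "real L + 2 > 0" "real k + 1 > 0" "(fact L :: real) > 0" "(fact k :: real) > 0"
    by auto
  then show ?thesis
    unfolding overlap_coeff_def p q
    by (simp add: divide_simps; simp add: algebra_simps)
qed

definition overlap_poly_coeff :: "nat \<Rightarrow> nat \<Rightarrow> nat \<Rightarrow> real" where
  "overlap_poly_coeff n m k = (if 2 * k < m then overlap_coeff n (m - 1 - 2 * k) k else 0)"

lemma overlap_poly_coeff_rec:
  "real (Suc (Suc M) - 2 * k) * overlap_poly_coeff n (Suc (Suc M)) k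
   = (if k = 0 then 0 else real (Suc (Suc M) - 2 * k) * overlap_poly_coeff n M (k - 1))
     + (2 * real n + 2 * real M + 3) * overlap_poly_coeff n (Suc M) k"
proof (cases "2 * k < Suc (Suc M)")
  case False
  then show ?thesis by (simp add: overlap_poly_coeff_def)
next
  case True
  show ?thesis
  proof (cases k)
    case 0
    then show ?thesis
      using overlap_coeff_Suc_0[of M n] by (simp add: overlap_poly_coeff_def add_ac)
  next
    case (Suc j)
    show ?thesis
    proof (cases "M = Suc (2 * j)")
      case True
      then show ?thesis
        using \<open>k = Suc j\<close> by (simp add: overlap_poly_coeff_def overlap_coeff_0_0)
    next
      case False
      obtain L where "M = L + 2 * j + 2"
        by (rule that[of "M - 2 * j - 2"]) (use False \<open>2 * k < Suc (Suc M)\<close> \<open>k = Suc j\<close> in arith)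
      then show ?thesis
        using \<open>k = Suc j\<close> overlap_coeff_Suc_Suc[of L n j]
        by (simp add: overlap_poly_coeff_def algebra_simps)
    qed
  qed
qed

definition overlap_poly :: "nat \<Rightarrow> nat \<Rightarrow> real \<Rightarrow> real" where
  "overlap_poly n m y =
     (if m = 0 then 2 / (2 * real n + 1) else (\<Sum>k<m. overlap_poly_coeff n m k * y ^ (m - 2 * k)))"

definition overlap_poly_deriv :: "nat \<Rightarrow> nat \<Rightarrow> real \<Rightarrow> real" where
  "overlap_poly_deriv n m y = (\<Sum>k<m. overlap_poly_coeff n m k * real (m - 2 * k) * y ^ (m - 2 * k - 1))"

lemma has_real_derivative_overlap_poly:
  "(overlap_poly n m has_real_derivative overlap_poly_deriv n m y) (at y)"
proof (cases "m = 0")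
  case True
  then show ?thesis
    by (simp add: overlap_poly_def[abs_def] overlap_poly_deriv_def)
next
  case False
  have "((\<lambda>y. \<Sum>k<m. overlap_poly_coeff n m k * y ^ (m - 2 * k)) has_real_derivative
      overlap_poly_deriv n m y) (at y)"
    unfolding overlap_poly_deriv_def
    by (rule derivative_eq_intros refl | simp add: algebra_simps)+
  with False show ?thesis
    by (simp add: overlap_poly_def[abs_def])
qed

lemma overlap_poly_deriv_Suc_Suc:
  "overlap_poly_deriv n (Suc (Suc M)) y
   = overlap_poly_deriv n M y + (2 * real n + 2 * real M + 3) * overlap_poly n (Suc M) y"
proof -
  define shifted where "shifted k =
    (if k = 0 then 0 else real (Suc (Suc M) - 2 * k) * overlap_poly_coeff n M (k - 1)) * y ^ (Suc M - 2 * k)"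
    for k
  have "(\<Sum>k<Suc (Suc M). shifted k)
      = (\<Sum>k<Suc M. overlap_poly_coeff n M k * real (M - 2 * k) * y ^ (M - 2 * k - 1))"
    unfolding sum.lessThan_Suc_shift by (simp add: shifted_def mult_ac)
  also have "\<dots> = overlap_poly_deriv n M y"
    by (simp add: overlap_poly_deriv_def overlap_poly_coeff_def)
  finally have deriv_M: "overlap_poly_deriv n M y = (\<Sum>k<Suc (Suc M). shifted k)" ..
  have poly_Suc_M: "overlap_poly n (Suc M) y
      = (\<Sum>k<Suc (Suc M). overlap_poly_coeff n (Suc M) k * y ^ (Suc M - 2 * k))"
    by (simp add: overlap_poly_def overlap_poly_coeff_def)
  have "overlap_poly_coeff n (Suc (Suc M)) k * real (Suc (Suc M) - 2 * k) * y ^ (Suc (Suc M) - 2 * k - 1)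
      = shifted k + (2 * real n + 2 * real M + 3) * (overlap_poly_coeff n (Suc M) k * y ^ (Suc M - 2 * k))"
    for k
  proof -
    have "Suc (Suc M) - 2 * k - 1 = Suc M - 2 * k"
      by simp
    then have "overlap_poly_coeff n (Suc (Suc M)) k * real (Suc (Suc M) - 2 * k) * y ^ (Suc (Suc M) - 2 * k - 1)
        = (real (Suc (Suc M) - 2 * k) * overlap_poly_coeff n (Suc (Suc M)) k) * y ^ (Suc M - 2 * k)"
      by (simp only: mult_ac)
    then show ?thesis
      unfolding overlap_poly_coeff_rec shifted_def by (simp add: algebra_simps)
  qed
  then show ?thesis
    unfolding deriv_M poly_Suc_M sum_distrib_left sum.distrib[symmetric]
    by (simp add: overlap_poly_deriv_def)
qed

lemma overlap_poly_0: "overlap_poly n 0 y = 2 / (2 * real n + 1)"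
  by (simp add: overlap_poly_def)

lemma overlap_poly_deriv_1: "overlap_poly_deriv n (Suc 0) y = 2"
  by (simp add: overlap_poly_deriv_def overlap_poly_coeff_def overlap_coeff_0_0)

lemma overlap_poly_at_0: "m \<noteq> 0 \<Longrightarrow> overlap_poly n m 0 = 0"
  unfolding overlap_poly_def overlap_poly_coeff_def by (auto intro!: sum.neutral)

lemma legendre_overlap_eq_overlap_poly: "legendre_overlap n (n + m) y = overlap_poly n m y"
proof (induction m arbitrary: y rule: induct_nat_012)
  case 0
  then show ?case
    by (simp add: legendre_overlap_diag overlap_poly_0)
next
  case 1
  have "(legendre_overlap n (n + Suc 0) has_real_derivative overlap_poly_deriv n (Suc 0) y) (at y)" for y
    using has_real_derivative_legendre_overlap[of n "Suc n" y]
    by (simp add: legendre_overlap_deriv_Suc overlap_poly_deriv_1)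
  then show ?case
    by (rule eq_if_same_real_derivative[OF _ has_real_derivative_overlap_poly, where a = 0])
       (simp add: legendre_overlap_at_0 overlap_poly_at_0)
next
  case (ge2 M)
  have "legendre_overlap n (n + M) = overlap_poly n M"
    using ge2.IH(1) by (rule ext)
  then have deriv_M: "legendre_overlap_deriv n (n + M) y = overlap_poly_deriv n M y" for y
    using has_real_derivative_legendre_overlap[of n "n + M" y] has_real_derivative_overlap_poly[of n M y]
    by (metis DERIV_unique)
  have "legendre_overlap_deriv n (n + Suc (Suc M)) y = overlap_poly_deriv n (Suc (Suc M)) y" for y
    using legendre_overlap_deriv_Suc_Suc[of n "n + M" y] deriv_M[of y] ge2.IH(2)[of y]
      overlap_poly_deriv_Suc_Suc[of n M y]
    by (simp add: algebra_simps)
  then have "(legendre_overlap n (n + Suc (Suc M)) has_real_derivative overlap_poly_deriv n (Suc (Suc M)) y) (at y)"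
    for y
    using has_real_derivative_legendre_overlap[of n "n + Suc (Suc M)" y] by simp
  then show ?case
    by (rule eq_if_same_real_derivative[OF _ has_real_derivative_overlap_poly, where a = 0])
       (simp add: legendre_overlap_at_0 overlap_poly_at_0)
qed

section \<open>The hypergeometric right-hand side\<close>

lemma hyp4F3_coeff_Suc:
  "hyp4F3_coeff a1 a2 a3 a4 b1 b2 b3 (Suc k) = hyp4F3_coeff a1 a2 a3 a4 b1 b2 b3 k
     * ((a1 + real k) * (a2 + real k) * (a3 + real k) * (a4 + real k)
        / ((b1 + real k) * (b2 + real k) * (b3 + real k) * (real k + 1)))"
  by (simp add: hyp4F3_coeff_def pochhammer_Suc field_simps)

lemma overlap_coeff_Suc_ratio:
  "overlap_coeff n L (Suc k)
     * ((real L + real k + 2) * (2 * real L + 2 * real k + 2 * real n + 5) * (2 * real n + 2 * real k + 3) * (real k + 1))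
   = overlap_coeff n (L + 2) k * ((real L + 3) * (real L + 2)\<^sup>2 * (real L + 1))"
proof -
  have p: "pochhammer (real n + real k + 3 / 2) (Suc (Suc L))
      = (real n + real k + 3 / 2) * pochhammer (real n + real (Suc k) + 3 / 2) L * (real n + real k + real L + 5 / 2)"
    by (subst pochhammer_rec, subst pochhammer_Suc) (simp add: add_ac)
  have "real L + 1 > 0" "real L + 2 > 0" "real L + 3 > 0" "real k + 1 > 0" "(fact L :: real) > 0" "(fact k :: real) > 0"
    by auto
  then show ?thesis
    unfolding overlap_coeff_def numeral_2_eq_2 add_Suc_right add_0_right p
    by (simp add: divide_simps power2_eq_square; simp add: algebra_simps)
qed

definition R_rhs_coeff :: "nat \<Rightarrow> nat \<Rightarrow> nat \<Rightarrow> real" where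
  "R_rhs_coeff m n k =
     Gamma (real m + real n + 1/2) / (Gamma (real m + 1) * Gamma (real n + 3/2)) * 2 ^ m *
     hyp4F3_coeff (- real m / 2) ((1 - real m) / 2) ((1 - real m) / 2) ((2 - real m) / 2)
                  (1 - real m) (1/2 - real m - real n) (real n + 3/2) k * 4 ^ k"

lemma R_rhs_eq_sum: "R_rhs m n y = (\<Sum>k\<in>{0..m div 2}. R_rhs_coeff m n k * y ^ (m - 2 * k))"
  unfolding R_rhs_def R_rhs_coeff_def sum_distrib_left by (simp add: mult_ac)

lemma R_rhs_coeff_0: "R_rhs_coeff (Suc M) n 0 = overlap_coeff n M 0"
proof -
  have "Gamma (real n + 3/2) > 0"
    by (rule Gamma_real_pos) simp
  moreover have "pochhammer (real n + 3/2) M = Gamma (real n + 3/2 + real M) / Gamma (real n + 3/2)"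
    by (rule pochhammer_Gamma) (auto dest: nonpos_Ints_nonpos)
  moreover have "Gamma (real M + 2) = fact (Suc M)"
    using Gamma_fact[of "Suc M"] by (simp add: add_ac)
  ultimately show ?thesis
    by (simp add: R_rhs_coeff_def hyp4F3_coeff_def overlap_coeff_def add_ac)
qed

lemma R_rhs_coeff_Suc:
  "R_rhs_coeff m n (Suc k) = R_rhs_coeff m n k
     * (4 * ((- real m / 2 + real k) * ((1 - real m) / 2 + real k) * ((1 - real m) / 2 + real k) * ((2 - real m) / 2 + real k))
        / ((1 - real m + real k) * (1/2 - real m - real n + real k) * (real n + 3/2 + real k) * (real k + 1)))"
  unfolding R_rhs_coeff_def hyp4F3_coeff_Suc by (simp add: mult_ac)

lemma R_rhs_coeff_eq_overlap_poly_coeff: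
  "0 < m \<Longrightarrow> k \<le> m div 2 \<Longrightarrow> R_rhs_coeff m n k = overlap_poly_coeff n m k"
proof (induction k)
  case 0
  then obtain M where "m = Suc M"
    using gr0_implies_Suc by blast
  then show ?case
    by (simp add: R_rhs_coeff_0 overlap_poly_coeff_def)
next
  case (Suc k)
  then have IH: "R_rhs_coeff m n k = overlap_poly_coeff n m k"
    by simp
  show ?case
  proof (cases "m = 2 * k + 2")
    case True
    \<comment> \<open>the upper parameter (2 - m)/2 reaches 0 here, so the series terminates\<close>
    then show ?thesis
      by (simp add: R_rhs_coeff_Suc overlap_poly_coeff_def)
  next
    case False
    with Suc.prems have "m = (m - 3 - 2 * k) + 3 + 2 * k"
      by arith
    then obtain L where m: "m = L + 3 + 2 * k"
      by blast
    define N where "N = (real L + 3) * (real L + 2)\<^sup>2 * (real L + 1)"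
    define D where "D = (real L + real k + 2) * (2 * real L + 2 * real k + 2 * real n + 5)
      * (2 * real n + 2 * real k + 3) * (real k + 1)"
    have pos: "real L + real k + 2 > 0" "2 * real L + 2 * real k + 2 * real n + 5 > 0"
      "2 * real n + 2 * real k + 3 > 0" "real k + 1 > 0"
      by linarith+
    then have "D \<noteq> 0"
      unfolding D_def by simp
    then have "overlap_poly_coeff n m (Suc k) = overlap_poly_coeff n m k * (N / D)"
      using overlap_coeff_Suc_ratio[of n L k]
      by (simp add: m overlap_poly_coeff_def N_def D_def field_simps)
    moreover have "4 * ((- real m / 2 + real k) * ((1 - real m) / 2 + real k) * ((1 - real m) / 2 + real k)
        * ((2 - real m) / 2 + real k)) / ((1 - real m + real k) * (1/2 - real m - real n + real k)
        * (real n + 3/2 + real k) * (real k + 1)) = N / D"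
      using pos unfolding m N_def D_def
      by (simp add: divide_simps power2_eq_square; simp add: algebra_simps)
    ultimately show ?thesis
      by (simp add: R_rhs_coeff_Suc IH)
  qed
qed

lemma R_rhs_0: "R_rhs 0 n y = 2 / (2 * real n + 1)"
proof -
  have "Gamma (real n + 1/2 + 1) = (real n + 1/2) * Gamma (real n + 1/2)"
    by (rule Gamma_plus1) (auto dest: nonpos_Ints_nonpos)
  then have Gamma_succ: "Gamma (real n + 3/2) = (real n + 1/2) * Gamma (real n + 1/2)"
    by (simp add: add.assoc)
  have "Gamma (real n + 1/2) \<noteq> 0"
    by (rule Gamma_nonzero) (auto dest: nonpos_Ints_nonpos)
  then have "R_rhs 0 n y = 1 / (real n + 1/2)"
    by (simp add: R_rhs_def hyp4F3_coeff_def Gamma_succ)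
  also have "\<dots> = 2 / (2 * real n + 1)"
    by (simp add: divide_simps)
  finally show ?thesis .
qed

lemma R_rhs_eq_overlap_poly: "R_rhs m n y = overlap_poly n m y"
proof (cases "m = 0")
  case True
  then show ?thesis
    by (simp add: R_rhs_0 overlap_poly_0)
next
  case False
  have "R_rhs m n y = (\<Sum>k\<in>{0..m div 2}. overlap_poly_coeff n m k * y ^ (m - 2 * k))"
    unfolding R_rhs_eq_sum using False by (simp add: R_rhs_coeff_eq_overlap_poly_coeff)
  also have "\<dots> = (\<Sum>k<m. overlap_poly_coeff n m k * y ^ (m - 2 * k))"
    by (rule sum.mono_neutral_left) (use False in \<open>auto simp: overlap_poly_coeff_def\<close>)
  also have "\<dots> = overlap_poly n m y"
    using False by (simp add: overlap_poly_def)
  finally show ?thesis .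
qed

theorem theorem5:
  fixes m n :: nat and y :: real
  shows "integral {-1..1} (\<lambda>x. legendre n x * legendre (n + m) (x + y)) = R_rhs m n y"
  using legendre_overlap_eq_overlap_poly[of n m y]
  by (simp add: legendre_overlap_def R_rhs_eq_overlap_poly)

end
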